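(* There exists a function $f : \mathbb{N}^{\mathbb{N}} \to \mathbb{N}$ such that Player I has a winning strategy in $\Gamma(f)$, and $C \cap \{f \ge r\}$ is uncountable for each $r \in \mathbb{R}$ and each Cantor set $C \subseteq \mathbb{N}^{\mathbb{N}}$.
   Context: Here $X = \mathbb{N}^{\mathbb{N}}$ (the branches of the full tree of finite sequences of natural numbers) with the product topology. A Cantor set is a subset homeomorphic to the middle-thirds Cantor set. $\{f \ge r\} = \{x : f(x) \ge r\}$. The game $\Gamma(f)$: Player I and Player II alternate, Player I moving first; Player I plays natural numbers $x_0, x_1, \dots$, and after each move $x_t$ Player II plays a real number $v_t$. Player II wins the run iff $f(x_0,x_1,\dots) = \limsup_{t\to\infty} v_t$; otherwise Player I wins. *)

theory Defs
  imports "HOL-Analysis.Analysis"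
begin

fun cantor_stage :: "nat \<Rightarrow> real set" where
  "cantor_stage 0 = {0..1}"
| "cantor_stage (Suc n) =
     (\<lambda>x. x / 3) ` cantor_stage n \<union> (\<lambda>x. 2 / 3 + x / 3) ` cantor_stage n"

definition middle_thirds_cantor :: "real set" where
  "middle_thirds_cantor = (\<Inter>n. cantor_stage n)"

text \<open>A Cantor set in Baire space (product topology on nat => nat, nat discrete).\<close>
definition cantor_subset :: "(nat \<Rightarrow> nat) set \<Rightarrow> bool" where
  "cantor_subset C \<longleftrightarrow> C homeomorphic middle_thirds_cantor"

text \<open>A strategy for Player I maps the list of Player II's
  previous moves v_0..v_{t-1} to the next move x_t (Player I's own earlier
  moves are determined by these).\<close>
definition II_wins_run :: "((nat \<Rightarrow> nat) \<Rightarrow> real) \<Rightarrow> (nat \<Rightarrow> nat) \<Rightarrow> (nat \<Rightarrow> real) \<Rightarrow> bool" where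
  "II_wins_run f x v \<longleftrightarrow> ereal (f x) = limsup (\<lambda>t. ereal (v t))"

definition I_winning_strategy :: "((nat \<Rightarrow> nat) \<Rightarrow> real) \<Rightarrow> (real list \<Rightarrow> nat) \<Rightarrow> bool" where
  "I_winning_strategy f \<sigma> \<longleftrightarrow>
     (\<forall>v :: nat \<Rightarrow> real. \<not> II_wins_run f (\<lambda>t. \<sigma> (map v [0..<t])) v)"

definition I_has_winning_strategy :: "((nat \<Rightarrow> nat) \<Rightarrow> real) \<Rightarrow> bool" where
  "I_has_winning_strategy f \<longleftrightarrow> (\<exists>\<sigma>. I_winning_strategy f \<sigma>)"

end

theory Submission
  imports Defs
begin

unbundle cardinal_syntax

text \<open>
  Player I answers each real move v of Player II by encoding the integer part of v as a natural
  number. From the run x alone one can then decode limsup of the integer parts, a value g with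
  g \<le> limsup v \<le> g + 1, so a function that puts f(x) outside the interval [g, g + 1] defeats
  every play of Player II. Such an f is obtained from any f0 by adding 2 to f0(x) where needed;
  this only increases f0, so it suffices that every level set of f0 meets every Cantor set in an
  uncountable set. That f0 is a Bernstein-type construction: there are only continuum many Cantor
  sets, as they are closed and hence determined by their countable sets of finite prefixes, while
  each of them has cardinality continuum; a transfinite recursion of length continuum therefore
  picks, for every Cantor set C, level m and index B \<subseteq> \<nat>, a fresh point of C, which f0
  sends to m.
\<close>

lemma inj_on_if_avoids_underS:
  assumes "Linear_order r" and "\<And>i. i \<in> Field r \<Longrightarrow> x i \<notin> x ` underS r i"
  shows "inj_on x (Field r)"
proof (rule inj_onI, rule ccontr)
  fix i j assume i: "i \<in> Field r" and j: "j \<in> Field r" and eq: "x i = x j" and "i \<noteq> j"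
  then have "i \<in> underS r j \<or> j \<in> underS r i"
    using assms(1) unfolding linear_order_on_def total_on_def underS_def by auto
  then show False using assms(2)[OF i] assms(2)[OF j] eq by (metis image_eqI)
qed

lemma inj_on_choice_card:
  fixes K :: "'i \<Rightarrow> 'a set"
  assumes big: "\<And>i. i \<in> I \<Longrightarrow> |I| \<le>o |K i|"
  shows "\<exists>x. inj_on x I \<and> (\<forall>i\<in>I. x i \<in> K i)"
proof -
  let ?r = "|I|"
  have WO: "Well_order ?r" and Field: "Field ?r = I"
    by (simp_all add: card_of_well_order_on Field_card_of)
  have wf: "wf (?r - Id)" using WO unfolding well_order_on_def by simp
  define H where "H = (\<lambda>(g :: 'i \<Rightarrow> 'a) i. SOME y. y \<in> K i \<and> y \<notin> g ` underS ?r i)"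
  define x where "x = wfrec (?r - Id) H"
  have "cut x (?r - Id) i ` underS ?r i = x ` underS ?r i" for i
    unfolding cut_def underS_def by (auto intro!: image_cong)
  then have x_eq: "x i = H x i" for i
    using wfrec[OF wf, of H i] unfolding x_def[symmetric] by (simp add: H_def)
  have fresh: "x i \<in> K i \<and> x i \<notin> x ` underS ?r i" if "i \<in> I" for i
  proof -
    have "|x ` underS ?r i| <o |I|"
      using card_of_underS[OF card_of_Card_order] that Field card_of_image ordLeq_ordLess_trans
      by fastforce
    then have "\<not> K i \<subseteq> x ` underS ?r i"
      using big[OF that] card_of_mono1 not_ordLess_ordLeq ordLess_ordLeq_trans by blast
    then have "\<exists>y. y \<in> K i \<and> y \<notin> x ` underS ?r i" by blast
    then show ?thesis unfolding x_eq[of i] H_def by (rule someI_ex)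
  qed
  have "inj_on x I"
    using inj_on_if_avoids_underS[of ?r x] WO fresh Field
    unfolding well_order_on_def by simp
  with fresh show ?thesis by blast
qed

definition cantor_point :: "(nat \<Rightarrow> bool) \<Rightarrow> real" where
  "cantor_point b = (\<Sum>n. (if b n then 2 else 0) / 3 ^ Suc n)"

lemma summable_cantor_digits: "summable (\<lambda>n. (if b n then 2 else 0) / (3::real) ^ Suc n)"
proof (rule summable_comparison_test)
  show "\<exists>N. \<forall>n\<ge>N. norm ((if b n then 2 else 0) / (3::real) ^ Suc n) \<le> 2/3 * (1/3) ^ n"
    by (auto simp: power_divide)
qed (intro summable_mult summable_geometric, simp)

lemma cantor_point_Suc:
  "cantor_point b = (if b 0 then 2 else 0) / 3 + cantor_point (b \<circ> Suc) / 3"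
proof -
  have "cantor_point b =
      (\<Sum>n. (if b (Suc n) then 2 else 0) / (3::real) ^ Suc (Suc n)) + (if b 0 then 2 else 0) / 3"
    unfolding cantor_point_def using suminf_split_head[OF summable_cantor_digits[of b]]
    by (simp add: summable_cantor_digits)
  also have "(\<Sum>n. (if b (Suc n) then 2 else 0) / (3::real) ^ Suc (Suc n)) = cantor_point (b \<circ> Suc) / 3"
    unfolding cantor_point_def
    by (subst suminf_divide[OF summable_cantor_digits, symmetric]) (simp add: mult.commute)
  finally show ?thesis by simp
qed

lemma cantor_point_bounds: "0 \<le> cantor_point b \<and> cantor_point b \<le> 1"
proof
  show "0 \<le> cantor_point b"
    unfolding cantor_point_def by (intro suminf_nonneg summable_cantor_digits) auto
  have "cantor_point b \<le> (\<Sum>n. 2/3 * (1/3::real) ^ n)"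
    unfolding cantor_point_def
    by (intro suminf_le summable_cantor_digits summable_mult summable_geometric)
       (auto simp: power_divide)
  also have "\<dots> = 1"
    by (subst suminf_mult) (auto simp: suminf_geometric summable_geometric)
  finally show "cantor_point b \<le> 1" .
qed

lemma cantor_point_in_stage: "cantor_point b \<in> cantor_stage k"
proof (induction k arbitrary: b)
  case 0
  then show ?case using cantor_point_bounds[of b] by simp
next
  case (Suc k)
  then show ?case using cantor_point_Suc[of b] by (cases "b 0") auto
qed

lemma cantor_point_in_middle_thirds_cantor: "cantor_point b \<in> middle_thirds_cantor"
  unfolding middle_thirds_cantor_def using cantor_point_in_stage by blast

lemma cantor_point_eq_imp_head_eq: "cantor_point b = cantor_point c \<Longrightarrow> b 0 = c 0"
  using cantor_point_Suc[of b] cantor_point_Suc[of c]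
    cantor_point_bounds[of "b \<circ> Suc"] cantor_point_bounds[of "c \<circ> Suc"]
  by (cases "b 0"; cases "c 0") auto

lemma inj_cantor_point: "inj cantor_point"
proof (rule injI, rule ext)
  fix b c :: "nat \<Rightarrow> bool" and n
  assume "cantor_point b = cantor_point c"
  then show "b n = c n"
  proof (induction n arbitrary: b c)
    case 0
    then show ?case by (rule cantor_point_eq_imp_head_eq)
  next
    case (Suc n)
    moreover have "b 0 = c 0" using Suc.prems by (rule cantor_point_eq_imp_head_eq)
    ultimately have "cantor_point (b \<circ> Suc) = cantor_point (c \<circ> Suc)"
      using cantor_point_Suc[of b] cantor_point_Suc[of c] by simp
    then show ?case using Suc.IH[of "b \<circ> Suc" "c \<circ> Suc"] by (simp add: comp_def)
  qed
qed

lemma card_of_Pow_nat_le_cantor_subset: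
  assumes "cantor_subset C"
  shows "|UNIV :: nat set set| \<le>o |C|"
proof -
  obtain h g where hg: "homeomorphism C middle_thirds_cantor h g"
    using assms unfolding cantor_subset_def homeomorphic_def by blast
  then have "inj_on g middle_thirds_cantor" "g ` middle_thirds_cantor \<subseteq> C"
    unfolding homeomorphism_def by (metis inj_on_inverseI, blast)
  moreover have "inj (\<lambda>A :: nat set. cantor_point (\<lambda>n. n \<in> A))"
    using inj_cantor_point by (auto simp: inj_def fun_eq_iff)
  ultimately have "inj (\<lambda>A :: nat set. g (cantor_point (\<lambda>n. n \<in> A)))"
    using cantor_point_in_middle_thirds_cantor
    by (auto simp: inj_def inj_on_def)
  then show ?thesis
    using \<open>g ` middle_thirds_cantor \<subseteq> C\<close> cantor_point_in_middle_thirds_cantor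
    by (intro card_of_ordLeqI[of "\<lambda>A. g (cantor_point (\<lambda>n. n \<in> A))"]) auto
qed

lemma compact_middle_thirds_cantor: "compact middle_thirds_cantor"
proof -
  have "compact (cantor_stage n)" for n
  proof (induction n)
    case (Suc n)
    have "continuous_on (cantor_stage n) (\<lambda>x::real. x / 3)"
      and "continuous_on (cantor_stage n) (\<lambda>x::real. 2/3 + x / 3)"
      by (intro continuous_intros; simp)+
    with Suc show ?case by (simp add: compact_continuous_image compact_Un)
  qed simp
  then show ?thesis
    unfolding middle_thirds_cantor_def by (intro compact_Inter) auto
qed

lemma Hausdorff_space_euclidean_fun: "Hausdorff_space (euclidean :: ('a \<Rightarrow> 'b::t2_space) topology)"
proof -
  have "Hausdorff_space (euclidean :: 'b topology)"
    unfolding Hausdorff_space_def disjnt_def using hausdorff by fastforce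
  then show ?thesis
    unfolding euclidean_product_topology[symmetric] Hausdorff_space_product_topology by simp
qed

lemma compact_imp_closed_fun: "compact (C :: ('a \<Rightarrow> 'b::t2_space) set) \<Longrightarrow> closed C"
  using compactin_imp_closedin[OF Hausdorff_space_euclidean_fun, of C] by simp

lemma closed_if_cantor_subset: "cantor_subset C \<Longrightarrow> closed C"
  unfolding cantor_subset_def
  using compact_middle_thirds_cantor homeomorphic_compactness compact_imp_closed_fun by blast

definition prefixes :: "(nat \<Rightarrow> nat) set \<Rightarrow> nat list set" where
  "prefixes C = {map x [0..<n] | x n. x \<in> C}"

lemma closed_eq_prefixes_limits:
  assumes "closed C"
  shows "C = {x. \<forall>n. map x [0..<n] \<in> prefixes C}"
proof
  show "C \<subseteq> {x. \<forall>n. map x [0..<n] \<in> prefixes C}" unfolding prefixes_def by blast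
next
  show "{x. \<forall>n. map x [0..<n] \<in> prefixes C} \<subseteq> C"
  proof
    fix x assume "x \<in> {x. \<forall>n. map x [0..<n] \<in> prefixes C}"
    then have x: "map x [0..<n] \<in> prefixes C" for n by simp
    have "\<exists>y\<in>C. \<forall>i<n. y i = x i" for n
    proof -
      from x obtain y m where "y \<in> C" and "map x [0..<n] = map y [0..<m]"
        unfolding prefixes_def by blast
      moreover from this(2) have "m = n" by (metis length_map length_upt diff_zero)
      ultimately show ?thesis by (auto simp: map_eq_conv)
    qed
    then obtain y where y: "\<And>n. y n \<in> C" and agree: "\<And>n i. i < n \<Longrightarrow> y n i = x i"
      by metis
    have "limitin (product_topology (\<lambda>i. euclidean) UNIV) y x sequentially"
      unfolding limitin_componentwise
    proof (intro conjI ballI)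
      fix i
      have "eventually (\<lambda>n. y n i = x i) sequentially"
        using agree by (intro eventually_sequentiallyI[of "Suc i"]) auto
      then show "limitin euclidean (\<lambda>n. y n i) (x i) sequentially"
        by (simp add: tendsto_eventually)
    qed (simp_all add: extensional_def)
    then have "y \<longlonglongrightarrow> x" by (simp add: euclidean_product_topology)
    with assms y show "x \<in> C" unfolding closed_sequential_limits by blast
  qed
qed

lemma card_of_cantor_subsets_le_Pow_nat:
  "|{C. cantor_subset C}| \<le>o |UNIV :: nat set set|"
proof (rule card_of_ordLeqI)
  show "inj_on (\<lambda>C. to_nat ` prefixes C) {C. cantor_subset C}"
  proof (rule inj_onI)
    fix C D assume "C \<in> {C. cantor_subset C}" "D \<in> {C. cantor_subset C}"
      and "to_nat ` prefixes C = to_nat ` prefixes D"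
    then have "closed C" "closed D" "prefixes C = prefixes D"
      by (simp_all add: closed_if_cantor_subset inj_image_eq_iff[OF inj_to_nat])
    then show "C = D" by (metis closed_eq_prefixes_limits)
  qed
qed simp

lemma uncountable_if_card_of_Pow_nat_le:
  assumes "|UNIV :: nat set set| \<le>o |S|"
  shows "uncountable S"
proof
  assume "countable S"
  then have "|S| \<le>o |UNIV :: nat set|"
    by (intro card_of_ordLeqI[of "to_nat_on S"]) (simp_all add: inj_on_to_nat_on)
  then have "|Pow (UNIV :: nat set)| \<le>o |UNIV :: nat set|"
    using assms ordLeq_transitive by simp
  then show False using card_of_Pow not_ordLess_ordLeq by blast
qed

lemma Bernstein_function:
  fixes \<C> :: "'a set set"
  assumes few: "|\<C>| \<le>o |UNIV :: nat set set|"
    and large: "\<And>C. C \<in> \<C> \<Longrightarrow> |UNIV :: nat set set| \<le>o |C|"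
  shows "\<exists>f :: 'a \<Rightarrow> nat. \<forall>C\<in>\<C>. \<forall>m. uncountable (C \<inter> f -` {m})"
proof -
  let ?P = "UNIV :: nat set set"
  define I where "I = \<C> \<times> (UNIV :: nat set) \<times> ?P"
  have "|UNIV :: nat set| \<le>o |?P|"
    using card_of_Pow[of "UNIV :: nat set"] ordLess_imp_ordLeq by simp
  moreover have "infinite ?P"
    using finite_Pow_iff[of "UNIV :: nat set"] by simp
  ultimately have "|I| \<le>o |?P|"
    unfolding I_def using few
    by (intro card_of_Times_ordLeq_infinite_Field)
      (auto simp: Field_card_of card_of_card_order_on intro: card_of_mono1)
  then have "|I| \<le>o |fst i|" if "i \<in> I" for i
    using large that ordLeq_transitive unfolding I_def by force
  then obtain x where inj: "inj_on x I" and x_in: "\<And>i. i \<in> I \<Longrightarrow> x i \<in> fst i"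
    using inj_on_choice_card[of I fst] by blast
  define f where "f y = (if y \<in> x ` I then fst (snd (inv_into I x y)) else 0)" for y
  have f_x: "f (x i) = fst (snd i)" if "i \<in> I" for i
    using that inj unfolding f_def by simp
  show ?thesis
  proof (intro exI ballI allI)
    fix C m assume "C \<in> \<C>"
    then have sub: "range (\<lambda>B. (C, m, B)) \<subseteq> I" unfolding I_def by auto
    have "inj (x \<circ> (\<lambda>B. (C, m, B)))"
      by (rule comp_inj_on[OF _ inj_on_subset[OF inj sub]]) (simp add: inj_def)
    moreover have "range (x \<circ> (\<lambda>B. (C, m, B))) \<subseteq> C \<inter> f -` {m}"
      using sub x_in f_x by fastforce
    ultimately have "|?P| \<le>o |C \<inter> f -` {m}|"
      using card_of_ordLeqI[of "x \<circ> (\<lambda>B. (C, m, B))" ?P] by blast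
    then show "uncountable (C \<inter> f -` {m})" by (rule uncountable_if_card_of_Pow_nat_le)
  qed
qed

definition floor_strategy :: "real list \<Rightarrow> nat" where
  "floor_strategy l = (if l = [] then 0 else to_nat \<lfloor>last l\<rfloor>)"

text \<open>In a run against floor_strategy, the move x (Suc t) encodes the floor of v t.\<close>

definition decoded_limsup :: "(nat \<Rightarrow> nat) \<Rightarrow> ereal" where
  "decoded_limsup x = limsup (\<lambda>t. ereal (of_int (from_nat (x (Suc t)))))"

definition avoid_interval :: "ereal \<Rightarrow> nat \<Rightarrow> nat" where
  "avoid_interval g a = (if g \<le> ereal (real a) \<and> ereal (real a) \<le> g + 1 then a + 2 else a)"

lemma decoded_limsup_floor_strategy:
  "decoded_limsup (\<lambda>t. floor_strategy (map v [0..<t])) = limsup (\<lambda>t. ereal (of_int \<lfloor>v t\<rfloor>))"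
  unfolding decoded_limsup_def floor_strategy_def by simp

lemma limsup_floor_bounds:
  fixes v :: "nat \<Rightarrow> real"
  shows "limsup (\<lambda>t. ereal (of_int \<lfloor>v t\<rfloor>)) \<le> limsup (\<lambda>t. ereal (v t))"
    and "limsup (\<lambda>t. ereal (v t)) \<le> limsup (\<lambda>t. ereal (of_int \<lfloor>v t\<rfloor>)) + 1"
proof -
  show "limsup (\<lambda>t. ereal (of_int \<lfloor>v t\<rfloor>)) \<le> limsup (\<lambda>t. ereal (v t))"
    by (intro Limsup_mono always_eventually) simp
  have "limsup (\<lambda>t. ereal (v t)) \<le> limsup (\<lambda>t. ereal (of_int \<lfloor>v t\<rfloor>) + 1)"
  proof (intro Limsup_mono always_eventually allI)
    fix t
    have "v t \<le> of_int \<lfloor>v t\<rfloor> + 1" by linarith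
    then show "ereal (v t) \<le> ereal (of_int \<lfloor>v t\<rfloor>) + 1" by (simp add: one_ereal_def)
  qed
  also have "\<dots> = limsup (\<lambda>t. ereal (of_int \<lfloor>v t\<rfloor>)) + 1"
    by (rule Limsup_add_ereal_right) simp_all
  finally show "limsup (\<lambda>t. ereal (v t)) \<le> limsup (\<lambda>t. ereal (of_int \<lfloor>v t\<rfloor>)) + 1" .
qed

lemma avoid_interval_neq:
  assumes "g \<le> L" and "L \<le> g + 1"
  shows "ereal (real (avoid_interval g a)) \<noteq> L"
  using assms unfolding avoid_interval_def by (cases g; cases L) auto

lemma avoid_interval_ge: "a \<le> avoid_interval g a"
  unfolding avoid_interval_def by simp

lemma I_has_winning_strategy_avoid_interval:
  "I_has_winning_strategy (\<lambda>x. real (avoid_interval (decoded_limsup x) (h x)))"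
  unfolding I_has_winning_strategy_def I_winning_strategy_def II_wins_run_def
proof (intro exI allI)
  fix v :: "nat \<Rightarrow> real"
  show "ereal (real (avoid_interval (decoded_limsup (\<lambda>t. floor_strategy (map v [0..<t])))
      (h (\<lambda>t. floor_strategy (map v [0..<t]))))) \<noteq> limsup (\<lambda>t. ereal (v t))"
    unfolding decoded_limsup_floor_strategy using limsup_floor_bounds[of v]
    by (rule avoid_interval_neq)
qed

theorem mainTheorem13:
  shows "\<exists>f :: (nat \<Rightarrow> nat) \<Rightarrow> nat.
           I_has_winning_strategy (\<lambda>x. real (f x)) \<and>
           (\<forall>(r::real) (C :: (nat \<Rightarrow> nat) set). cantor_subset C \<longrightarrow>
              uncountable (C \<inter> {x. real (f x) \<ge> r}))"
proof -
  obtain f0 :: "(nat \<Rightarrow> nat) \<Rightarrow> nat"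
    where f0: "\<And>C m. cantor_subset C \<Longrightarrow> uncountable (C \<inter> f0 -` {m})"
    using Bernstein_function[OF card_of_cantor_subsets_le_Pow_nat]
      card_of_Pow_nat_le_cantor_subset by auto
  define f where "f x = avoid_interval (decoded_limsup x) (f0 x)" for x
  have "uncountable (C \<inter> {x. real (f x) \<ge> r})" if "cantor_subset C" for r C
  proof -
    have "r \<le> real (f x)" if "f0 x = nat \<lceil>r\<rceil>" for x
      using real_nat_ceiling_ge[of r] avoid_interval_ge[of "f0 x"] that unfolding f_def
      by (metis of_nat_le_iff order_trans)
    then have "C \<inter> f0 -` {nat \<lceil>r\<rceil>} \<subseteq> C \<inter> {x. real (f x) \<ge> r}" by auto
    then show ?thesis using f0[OF that] by (meson countable_subset)
  qed
  moreover have "I_has_winning_strategy (\<lambda>x. real (f x))"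
    unfolding f_def by (fact I_has_winning_strategy_avoid_interval)
  ultimately show ?thesis by auto
qed

end
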